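(* The Bell polynomials $B_n(q)=\sum_{k=0}^nS(n,k)q^k$, $n\ge 0$, form a $q$-log-convex sequence.
   Context: $S(n,k)$ is the Stirling number of the second kind (number of partitions of $\{1,\dots,n\}$ into $k$ blocks), $S(0,0)=1$. For real polynomials $f,g$ write $f\le_q g$ if $g-f$ has nonnegative coefficients; a sequence $\{P_n(q)\}_{n\ge0}$ is $q$-log-convex if $P_n(q)^2\le_q P_{n-1}(q)P_{n+1}(q)$ for all $n\ge 1$. *)

theory Defs
  imports "HOL-Combinatorics.Stirling" "HOL-Computational_Algebra.Polynomial"
begin

definition bell_poly :: "nat \<Rightarrow> real poly" where
  "bell_poly n = (\<Sum>k\<le>n. monom (real (Stirling n k)) k)"

definition q_le :: "real poly \<Rightarrow> real poly \<Rightarrow> bool" where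
  "q_le f g \<longleftrightarrow> (\<forall>i. coeff (g - f) i \<ge> 0)"

definition q_log_convex :: "(nat \<Rightarrow> real poly) \<Rightarrow> bool" where
  "q_log_convex P \<longleftrightarrow> (\<forall>n\<ge>1. q_le ((P n)^2) (P (n - 1) * P (n + 1)))"

end

theory Submission
  imports Defs
begin

text \<open>
Since S(n+1,k) = S(n,k-1) + k S(n,k), the Bell polynomials satisfy
B_{n+1} = D B_n for the linear operator D f = q (f + f').
It therefore suffices to show that f D^2 f - (D f)^2 has nonnegative coefficients
whenever f has. Expanding f = sum a_k q^k bilinearly and symmetrising in the two
summation indices reduces this to the monomial identity
q^i D^2 q^j + q^j D^2 q^i - 2 D q^i D q^j = 2 q^(i+j+1) + (i-j)^2 q^(i+j).
\<close>

definition bell_op :: "'a::{comm_semiring_1,semiring_no_zero_divisors} poly \<Rightarrow> 'a poly" where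
  "bell_op f = pCons 0 (f + pderiv f)"

lemma bell_op_add: "bell_op (f + g) = bell_op f + bell_op g"
  by (simp add: bell_op_def pderiv_add algebra_simps)

lemma bell_op_smult: "bell_op (smult c f) = smult c (bell_op f)"
  by (simp add: bell_op_def pderiv_smult smult_add_right)

lemma bell_op_sum: "bell_op (\<Sum>k\<in>A. f k) = (\<Sum>k\<in>A. bell_op (f k))"
  by (induction A rule: infinite_finite_induct) (simp_all add: bell_op_add bell_op_def[of 0])

lemma bell_op_monom: "bell_op (monom c k) = monom c (Suc k) + monom (of_nat k * c) k"
  by (rule poly_eqI) (auto simp: bell_op_def coeff_pCons coeff_pderiv coeff_monom split: nat.splits)

lemma bell_op_bell_op_monom:
  "bell_op (bell_op (monom c k)) =
     monom c (Suc (Suc k)) + monom (of_nat (2 * k + 1) * c) (Suc k) + monom (of_nat (k ^ 2) * c) k"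
proof -
  have "Suc k + k = 2 * k + 1"
    by simp
  then have middle: "monom (of_nat (Suc k) * c) (Suc k) + monom (of_nat k * c) (Suc k) =
      monom (of_nat (2 * k + 1) * c) (Suc k)"
    by (simp only: add_monom of_nat_add [symmetric] distrib_right [symmetric])
  have low: "of_nat k * (of_nat k * c) = of_nat (k ^ 2) * c"
    by (simp only: of_nat_power power2_eq_square mult.assoc of_nat_mult)
  have "bell_op (bell_op (monom c k)) =
      monom c (Suc (Suc k)) + (monom (of_nat (Suc k) * c) (Suc k) + monom (of_nat k * c) (Suc k))
      + monom (of_nat k * (of_nat k * c)) k"
    by (simp add: bell_op_monom bell_op_add add_ac)
  then show ?thesis
    by (simp only: middle low)
qed

lemma bell_op_monom_symmetrized:
  fixes i j :: nat
  shows "monom 1 i * bell_op (bell_op (monom 1 j)) + monom 1 j * bell_op (bell_op (monom 1 i))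
           - smult 2 (bell_op (monom 1 i) * bell_op (monom 1 j))
         = smult 2 (monom 1 (Suc (i + j))) + monom ((real i - real j)^2) (i + j)"
proof (rule poly_eqI)
  fix n
  show "coeff (monom 1 i * bell_op (bell_op (monom 1 j)) + monom 1 j * bell_op (bell_op (monom 1 i))
          - smult 2 (bell_op (monom 1 i) * bell_op (monom 1 j))) n
        = coeff (smult 2 (monom 1 (Suc (i + j))) + monom ((real i - real j)^2) (i + j)) n"
    unfolding bell_op_bell_op_monom unfolding bell_op_monom distrib_left distrib_right mult_monom
      smult_add_right smult_monom coeff_add coeff_diff coeff_smult coeff_monom
    by (cases "n = i + j"; cases "n = Suc (i + j)"; cases "n = Suc (Suc (i + j))")
       (simp_all add: power2_eq_square algebra_simps)
qed

lemma sum_sum_symmetrize: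
  fixes c :: "'b \<Rightarrow> 'b \<Rightarrow> real"
  shows "(\<Sum>i\<in>A. \<Sum>j\<in>A. c i j) = (\<Sum>i\<in>A. \<Sum>j\<in>A. (c i j + c j i) / 2)"
  using sum.swap[of c A A] by (simp add: sum.distrib sum_divide_distrib[symmetric])

lemma bell_op_log_convex:
  fixes f :: "real poly"
  assumes nonneg: "\<And>k. coeff f k \<ge> 0"
  shows "q_le ((bell_op f)^2) (f * bell_op (bell_op f))"
  unfolding q_le_def
proof
  fix m
  define a where "a = coeff f"
  define e where "e k = (monom 1 k :: real poly)" for k
  define T where "T i j = e i * bell_op (bell_op (e j)) - bell_op (e i) * bell_op (e j)" for i j
  define c where "c i j = a i * a j * coeff (T i j) m" for i j
  let ?I = "{..degree f}"
  have f: "f = (\<Sum>k\<in>?I. smult (a k) (e k))"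
    by (simp add: a_def e_def smult_monom poly_as_sum_of_monoms)
  have "f * bell_op (bell_op f) = (\<Sum>i\<in>?I. \<Sum>j\<in>?I. smult (a i) (e i) * smult (a j) (bell_op (bell_op (e j))))"
    by (subst (1 2) f) (simp add: bell_op_sum bell_op_smult sum_product)
  moreover have "(bell_op f)^2 = (\<Sum>i\<in>?I. \<Sum>j\<in>?I. smult (a i) (bell_op (e i)) * smult (a j) (bell_op (e j)))"
    by (subst f) (simp add: bell_op_sum bell_op_smult power2_eq_square sum_product)
  ultimately have "coeff (f * bell_op (bell_op f) - (bell_op f)^2) m = (\<Sum>i\<in>?I. \<Sum>j\<in>?I. c i j)"
    by (simp add: c_def T_def coeff_sum sum_subtractf[symmetric] algebra_simps)
  also have "\<dots> = (\<Sum>i\<in>?I. \<Sum>j\<in>?I. (c i j + c j i) / 2)"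
    by (rule sum_sum_symmetrize)
  also have "\<dots> \<ge> 0"
  proof (intro sum_nonneg)
    fix i j
    have "c i j + c j i = a i * a j *
        coeff (smult 2 (monom 1 (Suc (i + j))) + monom ((real i - real j)^2) (i + j)) m"
      unfolding bell_op_monom_symmetrized[symmetric]
      by (simp add: c_def T_def e_def algebra_simps)
    also have "\<dots> \<ge> 0"
      using nonneg by (simp add: a_def coeff_monom)
    finally show "(c i j + c j i) / 2 \<ge> 0" by simp
  qed
  finally show "coeff (f * bell_op (bell_op f) - (bell_op f)^2) m \<ge> 0" .
qed

lemma coeff_bell_poly: "coeff (bell_poly n) k = real (Stirling n k)"
  by (cases "k \<le> n") (auto simp: bell_poly_def coeff_sum coeff_monom)

lemma bell_poly_Suc: "bell_poly (Suc n) = bell_op (bell_poly n)"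
proof (rule poly_eqI)
  fix k
  show "coeff (bell_poly (Suc n)) k = coeff (bell_op (bell_poly n)) k"
    by (cases k) (simp_all add: bell_op_def coeff_bell_poly coeff_pCons coeff_pderiv algebra_simps)
qed

theorem proposition4p4:
  shows "q_log_convex bell_poly"
  unfolding q_log_convex_def
proof (intro allI impI)
  fix n :: nat
  assume "n \<ge> 1"
  then obtain p where n: "n = Suc p"
    by (cases n) auto
  have "q_le ((bell_op (bell_poly p))^2) (bell_poly p * bell_op (bell_op (bell_poly p)))"
    by (rule bell_op_log_convex) (simp add: coeff_bell_poly)
  then show "q_le ((bell_poly n)^2) (bell_poly (n - 1) * bell_poly (n + 1))"
    by (simp add: n bell_poly_Suc)
qed

end
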